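(* For any $n$-node graph $G$ and any $r\in\mathbb{N}$, the number of $r$-cycles in $G$ can be counted within $(r-1)\cdot\mathcal{O}(\log n)$ rounds of the $\mathsf{HYBRID}$ model.
   Context: Distributed setting: $n$ nodes with unique IDs in $\{1,\dots,n\}$; local communication graph $G$ undirected; each node initially knows only its neighbors' IDs; synchronous rounds, unlimited local computation. In the $\mathsf{HYBRID}$ model, in every round each node may send a message of arbitrary size to each neighbor (local mode) and may additionally send and receive $\mathcal{O}(\log n)$-bit messages to/from up to $\mathcal{O}(\log n)$ arbitrary nodes (global mode); excess messages are dropped arbitrarily. An $r$-cycle is a cycle of length $r$; counting means every node learns the total number of $r$-cycles in $G$. *)

theory Defs
  imports Complex_Main
begin

definition simple_graph :: "nat \<Rightarrow> (nat \<Rightarrow> nat \<Rightarrow> bool) \<Rightarrow> bool" where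
  "simple_graph n E \<longleftrightarrow> (\<forall>u v. E u v \<longrightarrow> E v u) \<and> (\<forall>v. \<not> E v v)
                        \<and> (\<forall>u v. E u v \<longrightarrow> u \<in> {1..n} \<and> v \<in> {1..n})"

text \<open>The r-cycles of G, each identified with its edge set (a cycle subgraph).\<close>
definition r_cycles :: "nat \<Rightarrow> (nat \<Rightarrow> nat \<Rightarrow> bool) \<Rightarrow> nat \<Rightarrow> nat set set set" where
  "r_cycles n E r = {C. \<exists>f. 3 \<le> r \<and> inj_on f {..<r} \<and> f ` {..<r} \<subseteq> {1..n}
        \<and> (\<forall>i<r. E (f i) (f (Suc i mod r)))
        \<and> C = (\<lambda>i. {f i, f (Suc i mod r)}) ` {..<r}}"

definition num_r_cycles :: "nat \<Rightarrow> (nat \<Rightarrow> nat \<Rightarrow> bool) \<Rightarrow> nat \<Rightarrow> nat" where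
  "num_r_cycles n E r = card (r_cycles n E r)"

text \<open>Node states, local messages and global
  messages are encoded as natural numbers (unlimited local computation / memory).
  init n id neighbours; lmsg state dest; gmsg state = list of (destination, message);
  step state local_inbox global_inbox; out state.\<close>
record hyb_alg =
  h_init :: "nat \<Rightarrow> nat \<Rightarrow> nat set \<Rightarrow> nat"
  h_lmsg :: "nat \<Rightarrow> nat \<Rightarrow> nat"
  h_gmsg :: "nat \<Rightarrow> (nat \<times> nat) list"
  h_step :: "nat \<Rightarrow> (nat \<Rightarrow> nat) \<Rightarrow> (nat \<times> nat) set \<Rightarrow> nat"
  h_out  :: "nat \<Rightarrow> nat"

definition cap :: "real \<Rightarrow> nat \<Rightarrow> nat" where
  "cap c n = nat \<lceil>c * log 2 (real n)\<rceil>"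

definition g_sent :: "hyb_alg \<Rightarrow> nat \<Rightarrow> (nat \<Rightarrow> nat) \<Rightarrow> (nat \<times> nat \<times> nat) set" where
  "g_sent A n st = {(u, w, m). u \<in> {1..n} \<and> w \<in> {1..n} \<and> (w, m) \<in> set (h_gmsg A (st u))}"

text \<open>Admissible delivery: every receiver w gets an arbitrary subset of the messages
  addressed to it, of size min(k, number addressed to it); excess dropped arbitrarily.\<close>
definition admissible_delivery :: "nat \<Rightarrow> nat \<Rightarrow> (nat \<times> nat \<times> nat) set \<Rightarrow> (nat \<times> nat \<times> nat) set \<Rightarrow> bool" where
  "admissible_delivery n k S D \<longleftrightarrow> D \<subseteq> S \<and>
     (\<forall>w\<in>{1..n}. card {(u, m). (u, w, m) \<in> D} = min k (card {(u, m). (u, w, m) \<in> S}))"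

text \<open>s t v = state of node v after t rounds, for some adversarial choice of drops.\<close>
definition hyb_exec :: "hyb_alg \<Rightarrow> nat \<Rightarrow> (nat \<Rightarrow> nat \<Rightarrow> bool) \<Rightarrow> nat \<Rightarrow> (nat \<Rightarrow> nat \<Rightarrow> nat) \<Rightarrow> bool" where
  "hyb_exec A n E k s \<longleftrightarrow>
     (\<forall>v\<in>{1..n}. s 0 v = h_init A n v {u \<in> {1..n}. E v u}) \<and>
     (\<forall>t. \<exists>D. admissible_delivery n k (g_sent A n (s t)) D \<and>
        (\<forall>v\<in>{1..n}. s (Suc t) v =
           h_step A (s t v) (\<lambda>u. if u \<in> {1..n} \<and> E u v then h_lmsg A (s t u) v else 0)
                  {(u, m). (u, v, m) \<in> D}))"

definition respects_global_bw :: "nat \<Rightarrow> (nat \<times> nat) list \<Rightarrow> bool" where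
  "respects_global_bw k ms \<longleftrightarrow> length ms \<le> k \<and> (\<forall>(w, m) \<in> set ms. m < 2 ^ k)"

end

(*
  Every node repeatedly forwards to its neighbours all edges it knows, so after r rounds it
  knows every edge within distance r of itself, in particular every edge of each r-cycle
  whose minimum vertex it is; charging every cycle to its minimum vertex counts it once.

  A node's count is below n^(r+1), so it is written with r+1 digits in base n.  For every
  digit, the sum over a subtree of the heap-ordered binary tree on the IDs 1..n (children
  2v and 2v+1) is below n^2 and thus fits into an O(log n)-bit global message.  These
  digit sums are convergecast to the root and the totals are broadcast back, pipelined so
  that in round t every node handles digit t mod (r+1).  One tree level costs r+2 rounds
  and the depth is floor_log n, so after r + 1 + 2 (r+2) floor_log n <= 8 (r-1) log n
  rounds (for r, n >= 3; otherwise there are no r-cycles) every node outputs the count.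
*)

theory Submission
  imports Defs "HOL-Library.Countable" "HOL-Library.FuncSet" "HOL-Library.Discrete_Functions"
begin

section \<open>Base-n digits summed over the heap tree on 1..n\<close>

definition digit :: "nat \<Rightarrow> nat \<Rightarrow> nat \<Rightarrow> nat" where
  "digit b j x = x div b ^ j mod b"

lemma sum_digits_eq_mod: "(\<Sum>j<L. b ^ j * digit b j x) = x mod b ^ L"
proof (induction L)
  case 0
  then show ?case by simp
next
  case (Suc L)
  have "x mod b ^ Suc L = b ^ L * digit b L x + x mod b ^ L"
    unfolding digit_def by (metis power_Suc2 mod_mult2_eq)
  with Suc show ?case by simp
qed

lemma sum_digits_eq: "x < b ^ L \<Longrightarrow> (\<Sum>j<L. b ^ j * digit b j x) = x"
  by (simp add: sum_digits_eq_mod)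

lemma exists_mod_in_window:
  fixes a L j :: nat
  assumes "j < L"
  shows "\<exists>t. a \<le> t \<and> t < a + L \<and> t mod L = j"
proof (intro exI conjI)
  have "(a + (j + L - a mod L) mod L) mod L = (a mod L + (j + L - a mod L)) mod L"
    by (metis mod_add_left_eq mod_add_right_eq)
  also have "a mod L + (j + L - a mod L) = j + L"
    using assms mod_less_divisor[of L a] by linarith
  finally show "(a + (j + L - a mod L) mod L) mod L = j"
    using assms by simp
qed (use assms in auto)

definition heap_subtree :: "nat \<Rightarrow> nat \<Rightarrow> nat set" where
  "heap_subtree n w = {u \<in> {1..n}. \<exists>i. u div 2 ^ i = w}"

lemma finite_heap_subtree [simp]: "finite (heap_subtree n w)"
  unfolding heap_subtree_def by simp

lemma heap_subtree_subset: "heap_subtree n w \<subseteq> {1..n}"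
  unfolding heap_subtree_def by blast

lemma heap_subtree_ge: "u \<in> heap_subtree n w \<Longrightarrow> w \<le> u"
  unfolding heap_subtree_def using div_le_dividend by blast

lemma heap_subtree_empty: "n < w \<Longrightarrow> heap_subtree n w = {}"
  using heap_subtree_ge heap_subtree_subset by fastforce

lemma heap_subtree_root: "heap_subtree n 1 = {1..n}"
proof -
  have "\<exists>i. u div 2 ^ i = 1" if "1 \<le> u" for u :: nat
  proof
    show "u div 2 ^ floor_log u = 1"
      using that floor_log_exp2_le[of u] floor_log_exp2_gt[of u]
      by (simp add: div_eq_0_iff le_div_geq)
  qed
  then show ?thesis unfolding heap_subtree_def by auto
qed

lemma floor_log_child:
  assumes "1 \<le> v" "c = 2 * v \<or> c = 2 * v + 1"
  shows "floor_log c = Suc (floor_log v)"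
proof -
  have "c div 2 = v" "2 \<le> c"
    using assms by auto
  then show ?thesis
    using floor_log_rec[of c] by metis
qed

lemma div_power2_less_half:
  fixes u :: nat
  assumes "i < i'" shows "u div 2 ^ i' \<le> u div 2 ^ i div 2"
proof -
  have "u div 2 ^ i' = u div 2 ^ i div 2 ^ (i' - i)"
    using assms by (metis div_mult2_eq le_add_diff_inverse less_imp_le power_add)
  also have "\<dots> \<le> u div 2 ^ i div 2"
    using assms by (intro div_le_mono2) (simp_all add: self_le_power)
  finally show ?thesis .
qed

lemma heap_subtree_insert_children:
  assumes "1 \<le> w" "w \<le> n"
  shows "heap_subtree n w = insert w (heap_subtree n (2 * w) \<union> heap_subtree n (2 * w + 1))"
proof -
  have half: "z div 2 = w \<longleftrightarrow> z = 2 * w \<or> z = 2 * w + 1" for z :: nat by auto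
  have "(\<exists>i. u div 2 ^ i = w) \<longleftrightarrow> u = w \<or> (\<exists>i. u div 2 ^ i = 2 * w \<or> u div 2 ^ i = 2 * w + 1)"
    for u :: nat
  proof -
    have "(\<exists>i. u div 2 ^ i = w) \<longleftrightarrow> u = w \<or> (\<exists>i. u div 2 ^ Suc i = w)"
      by (metis not0_implies_Suc power_0 div_by_1)
    also have "\<dots> \<longleftrightarrow> u = w \<or> (\<exists>i. u div 2 ^ i = 2 * w \<or> u div 2 ^ i = 2 * w + 1)"
      by (simp only: power_Suc2 div_mult2_eq half)
    finally show ?thesis .
  qed
  then show ?thesis using assms unfolding heap_subtree_def by auto
qed

lemma heap_subtree_children_disjoint:
  assumes "1 \<le> w" shows "heap_subtree n (2 * w) \<inter> heap_subtree n (2 * w + 1) = {}"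
proof -
  have False if "u div 2 ^ i = 2 * w" "u div 2 ^ i' = 2 * w + 1" for u i i' :: nat
    using that assms div_power2_less_half[of i i' u] div_power2_less_half[of i' i u]
    by (cases i i' rule: linorder_cases) auto
  then show ?thesis unfolding heap_subtree_def by blast
qed

lemma sum_heap_subtree:
  assumes "1 \<le> w" "w \<le> n"
  shows "(\<Sum>u\<in>heap_subtree n w. g u)
    = g w + (\<Sum>u\<in>heap_subtree n (2 * w). g u) + (\<Sum>u\<in>heap_subtree n (2 * w + 1). g u)"
proof -
  have "w \<notin> heap_subtree n (2 * w) \<union> heap_subtree n (2 * w + 1)"
    using assms heap_subtree_ge[of w n "2 * w"] heap_subtree_ge[of w n "2 * w + 1"] by auto
  then show ?thesis
    using heap_subtree_children_disjoint[OF assms(1)]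
    by (simp add: heap_subtree_insert_children[OF assms] sum.union_disjoint add.assoc)
qed

definition heap_digit_sum :: "nat \<Rightarrow> (nat \<Rightarrow> nat) \<Rightarrow> nat \<Rightarrow> nat \<Rightarrow> nat" where
  "heap_digit_sum n g w j = (\<Sum>u\<in>heap_subtree n w. digit n j (g u))"

lemma heap_digit_sum_beyond: "n < w \<Longrightarrow> heap_digit_sum n g w j = 0"
  unfolding heap_digit_sum_def by (simp add: heap_subtree_empty)

lemma heap_digit_sum_rec:
  "1 \<le> w \<Longrightarrow> w \<le> n \<Longrightarrow>
    heap_digit_sum n g w j = digit n j (g w) + heap_digit_sum n g (2 * w) j + heap_digit_sum n g (2 * w + 1) j"
  unfolding heap_digit_sum_def by (rule sum_heap_subtree)

lemma heap_digit_sum_less: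
  assumes "2 \<le> n" shows "heap_digit_sum n g w j < n\<^sup>2"
proof -
  have "heap_digit_sum n g w j \<le> (\<Sum>u\<in>heap_subtree n w. n - 1)"
    unfolding heap_digit_sum_def digit_def using assms
    by (intro sum_mono) (simp add: less_Suc_eq_le[symmetric])
  also have "\<dots> \<le> n * (n - 1)"
    using card_mono[OF _ heap_subtree_subset, of n w] by simp
  also have "\<dots> < n\<^sup>2"
    using assms by (simp add: power2_eq_square)
  finally show ?thesis .
qed

lemma sum_heap_digit_sum_root:
  assumes "\<forall>u\<in>{1..n}. g u < n ^ L"
  shows "(\<Sum>j<L. n ^ j * heap_digit_sum n g 1 j) = (\<Sum>u\<in>{1..n}. g u)"
proof -
  have "(\<Sum>j<L. n ^ j * heap_digit_sum n g 1 j) = (\<Sum>u\<in>{1..n}. \<Sum>j<L. n ^ j * digit n j (g u))"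
    unfolding heap_digit_sum_def heap_subtree_root by (simp add: sum_distrib_left sum.swap[of _ "{..<L}"])
  also have "\<dots> = (\<Sum>u\<in>{1..n}. g u)"
    using assms by (simp add: sum_digits_eq)
  finally show ?thesis .
qed

section \<open>Counting r-cycles by their minimum vertex\<close>

lemma r_cycle_vertices:
  "0 < r \<Longrightarrow> \<Union>((\<lambda>i. {f i, f (Suc i mod r)}) ` {..<r}) = f ` {..<r}"
  by auto

lemma r_cycles_subset_PiE_image:
  "r_cycles n E r \<subseteq> (\<lambda>g. (\<lambda>i. {g i, g (Suc i mod r)}) ` {..<r}) ` ({..<r} \<rightarrow>\<^sub>E {1..n})"
proof
  fix C assume "C \<in> r_cycles n E r"
  then obtain f where f: "3 \<le> r" "f ` {..<r} \<subseteq> {1..n}" "C = (\<lambda>i. {f i, f (Suc i mod r)}) ` {..<r}"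
    unfolding r_cycles_def by blast
  have "C = (\<lambda>i. {restrict f {..<r} i, restrict f {..<r} (Suc i mod r)}) ` {..<r}"
    unfolding f(3) by (intro image_cong) auto
  moreover have "restrict f {..<r} \<in> {..<r} \<rightarrow>\<^sub>E {1..n}"
    using f(2) by auto
  ultimately show "C \<in> (\<lambda>g. (\<lambda>i. {g i, g (Suc i mod r)}) ` {..<r}) ` ({..<r} \<rightarrow>\<^sub>E {1..n})"
    by blast
qed

lemma finite_r_cycles: "finite (r_cycles n E r)"
  by (rule finite_subset[OF r_cycles_subset_PiE_image]) (auto intro: finite_PiE)

lemma card_r_cycles_le: "card (r_cycles n E r) \<le> n ^ r"
proof -
  have "card (r_cycles n E r)
      \<le> card ((\<lambda>g. (\<lambda>i. {g i, g (Suc i mod r)}) ` {..<r}) ` ({..<r} \<rightarrow>\<^sub>E {1..n}))"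
    by (rule card_mono[OF _ r_cycles_subset_PiE_image]) (auto intro: finite_PiE)
  also have "\<dots> \<le> card ({..<r} \<rightarrow>\<^sub>E {1..n})"
    by (rule card_image_le) (auto intro: finite_PiE)
  finally show ?thesis by (simp add: card_PiE)
qed

lemma r_cycles_empty: "r < 3 \<or> n < r \<Longrightarrow> r_cycles n E r = {}"
  unfolding r_cycles_def using card_inj_on_le[of _ "{..<r}" "{1..n}"] by fastforce

lemma r_cycles_MinE:
  assumes "C \<in> r_cycles n E r"
  obtains f i where "3 \<le> r" "inj_on f {..<r}" "f ` {..<r} \<subseteq> {1..n}"
    "\<forall>i<r. E (f i) (f (Suc i mod r))" "C = (\<lambda>i. {f i, f (Suc i mod r)}) ` {..<r}"
    "i < r" "Min (\<Union>C) = f i"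
proof -
  obtain f where f: "3 \<le> r" "inj_on f {..<r}" "f ` {..<r} \<subseteq> {1..n}"
    "\<forall>i<r. E (f i) (f (Suc i mod r))" "C = (\<lambda>i. {f i, f (Suc i mod r)}) ` {..<r}"
    using assms unfolding r_cycles_def by blast
  then have "Min (\<Union>C) \<in> f ` {..<r}"
    using r_cycle_vertices[of r f] Min_in[of "f ` {..<r}"] by (simp add: lessThan_empty_iff)
  with f that show thesis by blast
qed

definition r_cycles_with_min :: "nat \<Rightarrow> (nat \<Rightarrow> nat \<Rightarrow> bool) \<Rightarrow> nat \<Rightarrow> nat \<Rightarrow> nat set set set" where
  "r_cycles_with_min n E r v = {C \<in> r_cycles n E r. Min (\<Union>C) = v}"

lemma card_r_cycles_with_min_le: "card (r_cycles_with_min n E r v) \<le> n ^ r"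
  unfolding r_cycles_with_min_def
  by (rule order_trans[OF card_mono card_r_cycles_le]) (auto simp: finite_r_cycles)

lemma card_r_cycles_eq_sum_with_min:
  "card (r_cycles n E r) = (\<Sum>u\<in>{1..n}. card (r_cycles_with_min n E r u))"
proof -
  have "r_cycles n E r = (\<Union>u\<in>{1..n}. r_cycles_with_min n E r u)"
    unfolding r_cycles_with_min_def by (blast elim: r_cycles_MinE)
  moreover have "card (\<Union>u\<in>{1..n}. r_cycles_with_min n E r u)
      = (\<Sum>u\<in>{1..n}. card (r_cycles_with_min n E r u))"
    by (rule card_UN_disjoint)
      (auto simp: r_cycles_with_min_def intro: finite_subset[OF _ finite_r_cycles])
  ultimately show ?thesis by simp
qed

fun reachable_within :: "(nat \<Rightarrow> nat \<Rightarrow> bool) \<Rightarrow> nat \<Rightarrow> nat \<Rightarrow> nat \<Rightarrow> bool" where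
  "reachable_within E 0 v a \<longleftrightarrow> a = v"
| "reachable_within E (Suc t) v a \<longleftrightarrow>
     reachable_within E t v a \<or> (\<exists>u. E v u \<and> reachable_within E t u a)"

lemma reachable_within_mono:
  "t \<le> t' \<Longrightarrow> reachable_within E t v a \<Longrightarrow> reachable_within E t' v a"
  by (induction t' arbitrary: t) (auto simp: le_Suc_eq)

lemma reachable_within_along_cycle:
  assumes "\<forall>i<r. E (f i) (f (Suc i mod r))" "i < r"
  shows "reachable_within E m (f i) (f ((i + m) mod r))"
  using assms(2)
proof (induction m arbitrary: i)
  case 0
  then show ?case by simp
next
  case (Suc m)
  then have "reachable_within E m (f (Suc i mod r)) (f ((Suc i mod r + m) mod r))"
    by simp
  moreover have "(Suc i mod r + m) mod r = (i + Suc m) mod r"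
    by (simp add: mod_add_left_eq)
  ultimately show ?case
    using assms(1) Suc.prems by auto
qed

lemma r_cycles_mono: "(\<forall>a b. K a b \<longrightarrow> E a b) \<Longrightarrow> r_cycles n K r \<subseteq> r_cycles n E r"
  unfolding r_cycles_def by blast

lemma r_cycles_with_min_local:
  assumes sub: "\<forall>a b. K a b \<longrightarrow> E a b"
    and near: "\<forall>a b. E a b \<and> reachable_within E t v a \<longrightarrow> K a b"
    and "r \<le> t"
  shows "r_cycles_with_min n K r v = r_cycles_with_min n E r v"
proof
  show "r_cycles_with_min n K r v \<subseteq> r_cycles_with_min n E r v"
    unfolding r_cycles_with_min_def using r_cycles_mono[OF sub] by blast
next
  show "r_cycles_with_min n E r v \<subseteq> r_cycles_with_min n K r v"
  proof
    fix C assume C: "C \<in> r_cycles_with_min n E r v"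
    then obtain f i0 where f: "3 \<le> r" "inj_on f {..<r}" "f ` {..<r} \<subseteq> {1..n}"
      "\<forall>i<r. E (f i) (f (Suc i mod r))" "C = (\<lambda>i. {f i, f (Suc i mod r)}) ` {..<r}"
      and i0: "i0 < r" "v = f i0"
      unfolding r_cycles_with_min_def by (auto elim: r_cycles_MinE)
    have "K (f i) (f (Suc i mod r))" if "i < r" for i
    proof -
      have "(i0 + (r + i - i0)) mod r = i"
        using i0(1) that by simp
      then have "reachable_within E ((r + i - i0) mod r) v (f i)"
        using reachable_within_along_cycle[where E = E and f = f and m = "(r + i - i0) mod r", OF f(4) i0(1)]
          i0(2) by (simp add: mod_add_right_eq)
      then have "reachable_within E t v (f i)"
        by (rule reachable_within_mono[rotated])
          (use f(1) \<open>r \<le> t\<close> mod_less_divisor[of r "r + i - i0"] in linarith)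
      then show ?thesis
        using near f(4) that by blast
    qed
    then have "C \<in> r_cycles n K r"
      unfolding r_cycles_def using f by blast
    then show "C \<in> r_cycles_with_min n K r v"
      using C unfolding r_cycles_with_min_def by blast
  qed
qed

section \<open>The algorithm\<close>

text \<open>A triple (w, j, x) in partial_sums records that x is the digit-j sum of the
  cycle counts over the heap subtree of w; a pair (j, x) in total_digits records the
  digit-j sum over all nodes, as received from the parent.\<close>

datatype cc_state = CC_State
  (node_id: nat) (node_count: nat) (round_no: nat)
  (known_edges: "(nat \<times> nat) list")
  (partial_sums: "(nat \<times> nat \<times> nat) list")
  (total_digits: "(nat \<times> nat) list")

instance cc_state :: countable
  by countable_datatype

definition local_cycle_count :: "nat \<Rightarrow> cc_state \<Rightarrow> nat" where
  "local_cycle_count r \<sigma> =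
     card (r_cycles_with_min (node_count \<sigma>) (\<lambda>a b. (a, b) \<in> set (known_edges \<sigma>)) r (node_id \<sigma>))"

definition child_ready :: "cc_state \<Rightarrow> nat \<Rightarrow> nat \<Rightarrow> bool" where
  "child_ready \<sigma> c j \<longleftrightarrow> node_count \<sigma> < c \<or> (\<exists>x. (c, j, x) \<in> set (partial_sums \<sigma>))"

definition child_sum :: "cc_state \<Rightarrow> nat \<Rightarrow> nat \<Rightarrow> nat" where
  "child_sum \<sigma> c j = (if c \<le> node_count \<sigma> then SOME x. (c, j, x) \<in> set (partial_sums \<sigma>) else 0)"

definition own_partial_sums :: "nat \<Rightarrow> cc_state \<Rightarrow> (nat \<times> nat \<times> nat) list" where
  "own_partial_sums r \<sigma> =
    (let v = node_id \<sigma>; n = node_count \<sigma> in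
     if r \<le> round_no \<sigma> then
       map (\<lambda>j. (v, j, digit n j (local_cycle_count r \<sigma>) + child_sum \<sigma> (2 * v) j + child_sum \<sigma> (2 * v + 1) j))
         (filter (\<lambda>j. child_ready \<sigma> (2 * v) j \<and> child_ready \<sigma> (2 * v + 1) j) [0..<Suc r])
     else [])"

definition received_partial_sums :: "nat \<Rightarrow> cc_state \<Rightarrow> (nat \<times> nat) set \<Rightarrow> (nat \<times> nat \<times> nat) list" where
  "received_partial_sums r \<sigma> I =
    concat (map (\<lambda>c. if \<exists>m. (c, m) \<in> I then [(c, round_no \<sigma> mod Suc r, SOME m. (c, m) \<in> I)] else [])
      [2 * node_id \<sigma>, 2 * node_id \<sigma> + 1])"

definition received_totals :: "nat \<Rightarrow> cc_state \<Rightarrow> (nat \<times> nat) set \<Rightarrow> (nat \<times> nat) list" where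
  "received_totals r \<sigma> I =
    (if 2 \<le> node_id \<sigma> \<and> (\<exists>m. (node_id \<sigma> div 2, m) \<in> I)
     then [(round_no \<sigma> mod Suc r, SOME m. (node_id \<sigma> div 2, m) \<in> I)] else [])"

text \<open>The local message of a node is its list of known edges, encoded as Suc of its
  code, because the model delivers 0 along non-edges.\<close>

definition merge_known_edges :: "cc_state \<Rightarrow> (nat \<Rightarrow> nat) \<Rightarrow> (nat \<times> nat) list" where
  "merge_known_edges \<sigma> li =
    known_edges \<sigma> @ concat (map (\<lambda>u. if li u = 0 then [] else from_nat (li u - 1)) [1..<Suc (node_count \<sigma>)])"

definition cc_init :: "nat \<Rightarrow> nat \<Rightarrow> nat set \<Rightarrow> cc_state" where
  "cc_init n v N = CC_State v n 0 (concat (map (\<lambda>u. if u \<in> N then [(v, u)] else []) [1..<Suc n])) [] []"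

definition cc_step :: "nat \<Rightarrow> cc_state \<Rightarrow> (nat \<Rightarrow> nat) \<Rightarrow> (nat \<times> nat) set \<Rightarrow> cc_state" where
  "cc_step r \<sigma> li I =
    CC_State (node_id \<sigma>) (node_count \<sigma>) (Suc (round_no \<sigma>)) (merge_known_edges \<sigma> li)
      (partial_sums \<sigma> @ received_partial_sums r \<sigma> I @ own_partial_sums r \<sigma>)
      (total_digits \<sigma> @ received_totals r \<sigma> I)"

definition knows_total :: "cc_state \<Rightarrow> nat \<Rightarrow> nat \<Rightarrow> bool" where
  "knows_total \<sigma> j x \<longleftrightarrow>
    (if node_id \<sigma> = 1 then (1, j, x) \<in> set (partial_sums \<sigma>) else (j, x) \<in> set (total_digits \<sigma>))"

definition own_partial_sum :: "cc_state \<Rightarrow> nat \<Rightarrow> nat" where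
  "own_partial_sum \<sigma> j = (SOME x. (node_id \<sigma>, j, x) \<in> set (partial_sums \<sigma>))"

definition total_digit :: "cc_state \<Rightarrow> nat \<Rightarrow> nat" where
  "total_digit \<sigma> j = (SOME x. knows_total \<sigma> j x)"

definition payload :: "nat \<Rightarrow> cc_state \<Rightarrow> nat \<Rightarrow> nat" where
  "payload r \<sigma> w =
    (if w = node_id \<sigma> div 2 then own_partial_sum \<sigma> (round_no \<sigma> mod Suc r)
     else total_digit \<sigma> (round_no \<sigma> mod Suc r))"

text \<open>Nodes stay silent when n < 3: the capacity may then be 0, and there are no
  r-cycles anyway.  The bound on the payload never fails (heap_digit_sum_less); it only
  makes the bandwidth constraint hold by construction.\<close>

definition sends_to :: "nat \<Rightarrow> cc_state \<Rightarrow> nat \<Rightarrow> bool" where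
  "sends_to r \<sigma> w \<longleftrightarrow>
    (let j = round_no \<sigma> mod Suc r in
     3 \<le> node_count \<sigma> \<and> payload r \<sigma> w < (node_count \<sigma>)\<^sup>2 \<and>
     (if w = node_id \<sigma> div 2 then 2 \<le> node_id \<sigma> \<and> (\<exists>x. (node_id \<sigma>, j, x) \<in> set (partial_sums \<sigma>))
      else \<exists>x. knows_total \<sigma> j x))"

definition global_msgs :: "nat \<Rightarrow> cc_state \<Rightarrow> (nat \<times> nat) list" where
  "global_msgs r \<sigma> =
    map (\<lambda>w. (w, payload r \<sigma> w))
      (filter (sends_to r \<sigma>) [node_id \<sigma> div 2, 2 * node_id \<sigma>, 2 * node_id \<sigma> + 1])"

definition cc_output :: "nat \<Rightarrow> cc_state \<Rightarrow> nat" where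
  "cc_output r \<sigma> =
    (if 3 \<le> node_count \<sigma> \<and> (\<forall>j<Suc r. \<exists>x. knows_total \<sigma> j x)
     then \<Sum>j<Suc r. node_count \<sigma> ^ j * total_digit \<sigma> j else 0)"

definition cycle_count_alg :: "nat \<Rightarrow> hyb_alg" where
  "cycle_count_alg r =
    \<lparr>h_init = \<lambda>n v N. to_nat (cc_init n v N),
     h_lmsg = \<lambda>x _. Suc (to_nat (known_edges (from_nat x :: cc_state))),
     h_gmsg = \<lambda>x. global_msgs r (from_nat x),
     h_step = \<lambda>x li I. to_nat (cc_step r (from_nat x) li I),
     h_out = \<lambda>x. cc_output r (from_nat x)\<rparr>"

lemma global_msgs_mem:
  "(w, m) \<in> set (global_msgs r \<sigma>) \<longleftrightarrow>
    w \<in> {node_id \<sigma> div 2, 2 * node_id \<sigma>, 2 * node_id \<sigma> + 1} \<and> sends_to r \<sigma> w \<and> m = payload r \<sigma> w"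
  unfolding global_msgs_def by auto

lemma cycle_count_alg_simps:
  "h_init (cycle_count_alg r) n v N = to_nat (cc_init n v N)"
  "h_lmsg (cycle_count_alg r) = (\<lambda>x _. Suc (to_nat (known_edges (from_nat x :: cc_state))))"
  "h_gmsg (cycle_count_alg r) x = global_msgs r (from_nat x)"
  "h_step (cycle_count_alg r) x li I = to_nat (cc_step r (from_nat x) li I)"
  "h_out (cycle_count_alg r) x = cc_output r (from_nat x)"
  unfolding cycle_count_alg_def by simp_all

locale cc_run =
  fixes r n :: nat and E :: "nat \<Rightarrow> nat \<Rightarrow> bool" and k :: nat and s :: "nat \<Rightarrow> nat \<Rightarrow> nat"
  assumes simple: "simple_graph n E"
    and exec: "hyb_exec (cycle_count_alg r) n E k s"
begin

definition state :: "nat \<Rightarrow> nat \<Rightarrow> cc_state" where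
  "state t v = from_nat (s t v)"

definition local_inbox :: "nat \<Rightarrow> nat \<Rightarrow> nat \<Rightarrow> nat" where
  "local_inbox t v = (\<lambda>u. if u \<in> {1..n} \<and> E u v then Suc (to_nat (known_edges (state t u))) else 0)"

definition global_inbox :: "nat \<Rightarrow> nat \<Rightarrow> (nat \<times> nat) set" where
  "global_inbox t v = {(u, m). u \<in> {1..n} \<and> (v, m) \<in> set (global_msgs r (state t u))}"

lemma state_0: "v \<in> {1..n} \<Longrightarrow> state 0 v = cc_init n v {u \<in> {1..n}. E v u}"
  using exec unfolding hyb_exec_def state_def by (simp add: cycle_count_alg_simps(1))

lemma state_Suc:
  obtains I where "\<forall>v\<in>{1..n}. I v \<subseteq> global_inbox t v \<and> card (I v) = min k (card (global_inbox t v))"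
    and "\<forall>v\<in>{1..n}. state (Suc t) v = cc_step r (state t v) (local_inbox t v) (I v)"
proof -
  obtain D where D: "admissible_delivery n k (g_sent (cycle_count_alg r) n (s t)) D"
    and step: "\<forall>v\<in>{1..n}. s (Suc t) v = h_step (cycle_count_alg r) (s t v)
        (\<lambda>u. if u \<in> {1..n} \<and> E u v then h_lmsg (cycle_count_alg r) (s t u) v else 0)
        {(u, m). (u, v, m) \<in> D}"
    using exec unfolding hyb_exec_def by blast
  have inbox: "{(u, m). (u, v, m) \<in> g_sent (cycle_count_alg r) n (s t)} = global_inbox t v"
    if "v \<in> {1..n}" for v
    using that unfolding g_sent_def global_inbox_def state_def by (auto simp: cycle_count_alg_simps)
  have "{(u, m). (u, v, m) \<in> D} \<subseteq> global_inbox t v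
      \<and> card {(u, m). (u, v, m) \<in> D} = min k (card (global_inbox t v))" if "v \<in> {1..n}" for v
  proof -
    have "{(u, m). (u, v, m) \<in> D} \<subseteq> {(u, m). (u, v, m) \<in> g_sent (cycle_count_alg r) n (s t)}"
      using D unfolding admissible_delivery_def by blast
    moreover have "card {(u, m). (u, v, m) \<in> D}
        = min k (card {(u, m). (u, v, m) \<in> g_sent (cycle_count_alg r) n (s t)})"
      using D that unfolding admissible_delivery_def by blast
    ultimately show ?thesis
      unfolding inbox[OF that] by blast
  qed
  moreover have "\<forall>v\<in>{1..n}. state (Suc t) v
      = cc_step r (state t v) (local_inbox t v) {(u, m). (u, v, m) \<in> D}"
    using step unfolding state_def local_inbox_def cycle_count_alg_simps by simp
  ultimately show thesis
    using that[of "\<lambda>v. {(u, m). (u, v, m) \<in> D}"] by blast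
qed

lemma state_fields:
  "v \<in> {1..n} \<Longrightarrow> node_id (state t v) = v \<and> node_count (state t v) = n \<and> round_no (state t v) = t"
proof (induction t arbitrary: v)
  case 0
  then show ?case by (simp add: state_0 cc_init_def)
next
  case (Suc t)
  obtain I where "\<forall>v\<in>{1..n}. state (Suc t) v = cc_step r (state t v) (local_inbox t v) (I v)"
    by (rule state_Suc) blast
  with Suc show ?case by (simp add: cc_step_def)
qed

lemma node_id_state [simp]: "v \<in> {1..n} \<Longrightarrow> node_id (state t v) = v"
  and node_count_state [simp]: "v \<in> {1..n} \<Longrightarrow> node_count (state t v) = n"
  and round_no_state [simp]: "v \<in> {1..n} \<Longrightarrow> round_no (state t v) = t"
  using state_fields by blast+

lemma set_merge_known_edges:
  assumes "v \<in> {1..n}"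
  shows "set (merge_known_edges (state t v) (local_inbox t v))
    = set (known_edges (state t v)) \<union> (\<Union>u\<in>{u \<in> {1..n}. E u v}. set (known_edges (state t u)))"
  using assms
  by (auto simp: merge_known_edges_def local_inbox_def atLeastLessThanSuc_atLeastAtMost simp del: upt_Suc)

lemma known_edges_state:
  assumes "v \<in> {1..n}"
  shows "(\<forall>(a, b)\<in>set (known_edges (state t v)). E a b)
    \<and> (\<forall>a b. E a b \<and> reachable_within E t v a \<longrightarrow> (a, b) \<in> set (known_edges (state t v)))"
  using assms
proof (induction t arbitrary: v)
  case 0
  have "set (known_edges (state 0 v)) = {(v, u) | u. u \<in> {1..n} \<and> E v u}"
    using 0 by (auto simp: state_0 cc_init_def split: if_splits)
  then show ?case
    using simple unfolding simple_graph_def by auto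
next
  case (Suc t)
  obtain I where "\<forall>v\<in>{1..n}. state (Suc t) v = cc_step r (state t v) (local_inbox t v) (I v)"
    by (rule state_Suc) blast
  then have K: "set (known_edges (state (Suc t) v))
      = set (known_edges (state t v)) \<union> (\<Union>u\<in>{u \<in> {1..n}. E u v}. set (known_edges (state t u)))"
    using Suc.prems set_merge_known_edges[OF Suc.prems] by (simp add: cc_step_def)
  have "E a b" if "(a, b) \<in> set (known_edges (state (Suc t) v))" for a b
    using that Suc.IH Suc.prems unfolding K by blast
  moreover have "(a, b) \<in> set (known_edges (state (Suc t) v))"
    if "E a b" "reachable_within E (Suc t) v a" for a b
  proof -
    from that(2) consider "reachable_within E t v a" | u where "E v u" "reachable_within E t u a"
      by auto
    then show ?thesis
    proof cases
      case 1
      then show ?thesis unfolding K using Suc.IH[OF Suc.prems] that(1) by blast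
    next
      case 2
      then have "E u v" "u \<in> {1..n}"
        using simple unfolding simple_graph_def by blast+
      with 2 show ?thesis unfolding K using Suc.IH that(1) by blast
    qed
  qed
  ultimately show ?case by blast
qed

lemma local_cycle_count_state:
  assumes "v \<in> {1..n}" "r \<le> t"
  shows "local_cycle_count r (state t v) = card (r_cycles_with_min n E r v)"
proof -
  have "r_cycles_with_min n (\<lambda>a b. (a, b) \<in> set (known_edges (state t v))) r v = r_cycles_with_min n E r v"
    using known_edges_state[OF assms(1), of t] assms(2) by (intro r_cycles_with_min_local) auto
  then show ?thesis
    using assms(1) unfolding local_cycle_count_def by simp
qed

lemma global_msgs_respect_bw:
  assumes v: "v \<in> {1..n}" and k: "3 \<le> n \<Longrightarrow> 3 \<le> k \<and> n\<^sup>2 \<le> 2 ^ k"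
  shows "respects_global_bw k (global_msgs r (state t v))"
proof (cases "3 \<le> n")
  case False
  then have "global_msgs r (state t v) = []"
    using v by (simp add: global_msgs_def sends_to_def)
  then show ?thesis
    by (simp add: respects_global_bw_def)
next
  case True
  have "length (global_msgs r (state t v)) \<le> 3"
    unfolding global_msgs_def
    using length_filter_le[of "sends_to r (state t v)" "[v div 2, 2 * v, 2 * v + 1]"] v by simp
  moreover have "m < 2 ^ k" if "(w, m) \<in> set (global_msgs r (state t v))" for w m
  proof -
    have "m < n\<^sup>2"
      using that v by (auto simp: global_msgs_mem sends_to_def Let_def)
    then show ?thesis
      using k True by linarith
  qed
  ultimately show ?thesis
    using k True unfolding respects_global_bw_def by fastforce
qed

end

locale cc_lossless_run = cc_run +
  assumes three_le_n: "3 \<le> n" and three_le_k: "3 \<le> k"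
begin

abbreviation digit_sum :: "nat \<Rightarrow> nat \<Rightarrow> nat" where
  "digit_sum \<equiv> heap_digit_sum n (\<lambda>u. card (r_cycles_with_min n E r u))"

lemma global_inbox_subset:
  assumes "v \<in> {1..n}"
  shows "global_inbox t v \<subseteq> (\<lambda>u. (u, payload r (state t u) v)) ` {2 * v, 2 * v + 1, v div 2}"
proof
  fix x assume "x \<in> global_inbox t v"
  then obtain u m where x: "x = (u, m)" "u \<in> {1..n}" "(v, m) \<in> set (global_msgs r (state t u))"
    unfolding global_inbox_def by blast
  then have "v \<in> {u div 2, 2 * u, 2 * u + 1}" "m = payload r (state t u) v"
    using global_msgs_mem[of v m r "state t u"] by auto
  then have "u \<in> {2 * v, 2 * v + 1, v div 2}" by auto
  with x(1) \<open>m = payload r (state t u) v\<close>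
  show "x \<in> (\<lambda>u. (u, payload r (state t u) v)) ` {2 * v, 2 * v + 1, v div 2}"
    by blast
qed

lemma state_Suc_lossless:
  assumes "v \<in> {1..n}"
  shows "state (Suc t) v = cc_step r (state t v) (local_inbox t v) (global_inbox t v)"
proof -
  obtain I where I: "\<forall>v\<in>{1..n}. I v \<subseteq> global_inbox t v \<and> card (I v) = min k (card (global_inbox t v))"
    and step: "\<forall>v\<in>{1..n}. state (Suc t) v = cc_step r (state t v) (local_inbox t v) (I v)"
    by (rule state_Suc)
  have fin: "finite (global_inbox t v)"
    using finite_subset[OF global_inbox_subset[OF assms]] by blast
  have "card (global_inbox t v) \<le> card ((\<lambda>u. (u, payload r (state t u) v)) ` {2 * v, 2 * v + 1, v div 2})"
    by (rule card_mono[OF _ global_inbox_subset[OF assms]]) simp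
  also have "\<dots> \<le> card {2 * v, 2 * v + 1, v div 2}"
    by (rule card_image_le) simp
  also have "\<dots> \<le> k"
    using three_le_k card_insert_le_m1[of 3] by (simp add: card_insert_if)
  finally have "I v = global_inbox t v"
    using I assms card_subset_eq[OF fin] by (metis min.absorb2)
  then show ?thesis
    using step assms by simp
qed

lemma global_inbox_from_child:
  assumes "v \<in> {1..n}" "c = 2 * v \<or> c = 2 * v + 1" "(c, m) \<in> global_inbox t v"
  shows "c \<in> {1..n} \<and> (c, t mod Suc r, m) \<in> set (partial_sums (state t c))"
proof -
  have c: "c \<in> {1..n}" "(v, m) \<in> set (global_msgs r (state t c))"
    using assms(3) unfolding global_inbox_def by auto
  moreover have "v = c div 2"
    using assms(2) by auto
  ultimately have "\<exists>x. (c, t mod Suc r, x) \<in> set (partial_sums (state t c))"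
    and "m = own_partial_sum (state t c) (t mod Suc r)"
    by (auto simp: global_msgs_mem sends_to_def payload_def Let_def)
  then show ?thesis
    using c(1) unfolding own_partial_sum_def by (auto intro: someI_ex)
qed

lemma global_inbox_from_parent:
  assumes "v \<in> {1..n}" "2 \<le> v" "(v div 2, m) \<in> global_inbox t v"
  shows "v div 2 \<in> {1..n} \<and> knows_total (state t (v div 2)) (t mod Suc r) m"
proof -
  have p: "v div 2 \<in> {1..n}" "(v, m) \<in> set (global_msgs r (state t (v div 2)))"
    using assms(3) unfolding global_inbox_def by auto
  moreover have "v \<noteq> v div 2 div 2"
    using assms(2) by auto
  ultimately have "\<exists>x. knows_total (state t (v div 2)) (t mod Suc r) x"
    and "m = total_digit (state t (v div 2)) (t mod Suc r)"
    by (auto simp: global_msgs_mem sends_to_def payload_def Let_def)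
  then show ?thesis
    using p(1) unfolding total_digit_def by (auto intro: someI_ex)
qed

definition stored_values_correct :: "nat \<Rightarrow> bool" where
  "stored_values_correct t \<longleftrightarrow> (\<forall>v\<in>{1..n}.
     (\<forall>(w, j, x)\<in>set (partial_sums (state t v)). x = digit_sum w j) \<and>
     (\<forall>(j, x)\<in>set (total_digits (state t v)). x = digit_sum 1 j))"

lemma knows_total_correct:
  "stored_values_correct t \<Longrightarrow> v \<in> {1..n} \<Longrightarrow> knows_total (state t v) j x \<Longrightarrow> x = digit_sum 1 j"
  unfolding stored_values_correct_def knows_total_def by (auto split: if_splits)

lemma child_sum_correct:
  assumes "stored_values_correct t" "v \<in> {1..n}" "child_ready (state t v) c j"
  shows "child_sum (state t v) c j = digit_sum c j"
proof (cases "c \<le> n")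
  case True
  then obtain y where "(c, j, y) \<in> set (partial_sums (state t v))"
    using assms(2,3) unfolding child_ready_def by auto
  then have "(c, j, child_sum (state t v) c j) \<in> set (partial_sums (state t v))"
    using True assms(2) unfolding child_sum_def by (auto intro: someI)
  then show ?thesis
    using assms(1,2) unfolding stored_values_correct_def by blast
next
  case False
  then show ?thesis
    using assms(2) by (simp add: child_sum_def heap_digit_sum_beyond)
qed

lemma own_partial_sums_correct:
  assumes "stored_values_correct t" "v \<in> {1..n}" "(w, j, x) \<in> set (own_partial_sums r (state t v))"
  shows "x = digit_sum w j"
proof -
  have "r \<le> t" "w = v" and ready: "child_ready (state t v) (2 * v) j" "child_ready (state t v) (2 * v + 1) j"
    and x: "x = digit n j (local_cycle_count r (state t v))
               + child_sum (state t v) (2 * v) j + child_sum (state t v) (2 * v + 1) j"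
    using assms(2,3) unfolding own_partial_sums_def Let_def by (auto split: if_splits)
  then show ?thesis
    using assms(2) child_sum_correct[OF assms(1,2) ready(1)] child_sum_correct[OF assms(1,2) ready(2)]
    by (simp add: local_cycle_count_state heap_digit_sum_rec)
qed

lemma received_partial_sums_correct:
  assumes "stored_values_correct t" "v \<in> {1..n}"
    "(w, j, x) \<in> set (received_partial_sums r (state t v) (global_inbox t v))"
  shows "x = digit_sum w j"
proof -
  have w: "w = 2 * v \<or> w = 2 * v + 1" "j = t mod Suc r" "(w, x) \<in> global_inbox t v"
    using assms(2,3) unfolding received_partial_sums_def by (auto split: if_splits intro: someI_ex)
  then show ?thesis
    using global_inbox_from_child[OF assms(2) w(1,3)] assms(1) unfolding stored_values_correct_def by blast
qed

lemma received_totals_correct: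
  assumes "stored_values_correct t" "v \<in> {1..n}"
    "(j, x) \<in> set (received_totals r (state t v) (global_inbox t v))"
  shows "x = digit_sum 1 j"
proof -
  have "2 \<le> v" "j = t mod Suc r" "(v div 2, x) \<in> global_inbox t v"
    using assms(2,3) unfolding received_totals_def by (auto split: if_splits intro: someI_ex)
  then show ?thesis
    using global_inbox_from_parent[OF assms(2)] knows_total_correct[OF assms(1)] by blast
qed

lemma set_partial_sums_Suc:
  "v \<in> {1..n} \<Longrightarrow> set (partial_sums (state (Suc t) v)) = set (partial_sums (state t v))
    \<union> set (received_partial_sums r (state t v) (global_inbox t v)) \<union> set (own_partial_sums r (state t v))"
  by (simp add: state_Suc_lossless cc_step_def Un_assoc)

lemma set_total_digits_Suc:
  "v \<in> {1..n} \<Longrightarrow> set (total_digits (state (Suc t) v))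
    = set (total_digits (state t v)) \<union> set (received_totals r (state t v) (global_inbox t v))"
  by (simp add: state_Suc_lossless cc_step_def)

lemma stored_values_always_correct: "stored_values_correct t"
proof (induction t)
  case 0
  have "partial_sums (state 0 v) = [] \<and> total_digits (state 0 v) = []" if "v \<in> {1..n}" for v
    using that by (simp add: state_0 cc_init_def)
  then show ?case
    unfolding stored_values_correct_def by simp
next
  case (Suc t)
  have "(\<forall>(w, j, x)\<in>set (partial_sums (state (Suc t) v)). x = digit_sum w j)
    \<and> (\<forall>(j, x)\<in>set (total_digits (state (Suc t) v)). x = digit_sum 1 j)" if v: "v \<in> {1..n}" for v
    using Suc v received_partial_sums_correct[OF Suc v] own_partial_sums_correct[OF Suc v]
      received_totals_correct[OF Suc v]
    unfolding set_partial_sums_Suc[OF v] set_total_digits_Suc[OF v] stored_values_correct_def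
    by blast
  then show ?case
    unfolding stored_values_correct_def by blast
qed

lemma partial_sums_mono:
  assumes "v \<in> {1..n}" "t \<le> t'"
  shows "set (partial_sums (state t v)) \<subseteq> set (partial_sums (state t' v))"
  using lift_Suc_mono_le[of "\<lambda>t. set (partial_sums (state t v))"] assms
  by (auto simp: set_partial_sums_Suc)

lemma total_digits_mono:
  assumes "v \<in> {1..n}" "t \<le> t'"
  shows "set (total_digits (state t v)) \<subseteq> set (total_digits (state t' v))"
  using lift_Suc_mono_le[of "\<lambda>t. set (total_digits (state t v))"] assms
  by (auto simp: set_total_digits_Suc)

lemma partial_sum_sent_up:
  assumes v: "v \<in> {1..n}" and c: "c = 2 * v \<or> c = 2 * v + 1" "c \<le> n"
    and x: "(c, t mod Suc r, x) \<in> set (partial_sums (state t c))"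
  shows "\<exists>y. (c, t mod Suc r, y) \<in> set (partial_sums (state (Suc t) v))"
proof -
  let ?j = "t mod Suc r" and ?m = "own_partial_sum (state t c) (t mod Suc r)"
  have cn: "c \<in> {1..n}" and parent: "c div 2 = v" "2 \<le> c"
    using v c by auto
  have "(c, ?j, ?m) \<in> set (partial_sums (state t c))"
    using cn x unfolding own_partial_sum_def by (auto intro: someI)
  then have "?m = digit_sum c ?j"
    using stored_values_always_correct cn unfolding stored_values_correct_def by blast
  then have "?m < n\<^sup>2"
    using three_le_n heap_digit_sum_less[of n] by simp
  moreover have "payload r (state t c) v = ?m"
    using cn parent by (simp add: payload_def)
  ultimately have "sends_to r (state t c) v"
    using cn parent three_le_n x unfolding sends_to_def Let_def by auto
  then have "(v, ?m) \<in> set (global_msgs r (state t c))"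
    using cn parent \<open>payload r (state t c) v = ?m\<close> by (auto simp: global_msgs_mem)
  then have "(c, ?m) \<in> global_inbox t v"
    using cn unfolding global_inbox_def by blast
  then have "(c, ?j, SOME m. (c, m) \<in> global_inbox t v)
      \<in> set (received_partial_sums r (state t v) (global_inbox t v))"
    using v c(1) unfolding received_partial_sums_def by auto
  then show ?thesis
    using v by (auto simp: set_partial_sums_Suc)
qed

lemma own_partial_sum_added:
  assumes v: "v \<in> {1..n}" and "r \<le> t" "j < Suc r"
    and "child_ready (state t v) (2 * v) j" "child_ready (state t v) (2 * v + 1) j"
  shows "\<exists>x. (v, j, x) \<in> set (partial_sums (state (Suc t) v))"
proof -
  have "\<exists>x. (v, j, x) \<in> set (own_partial_sums r (state t v))"
    using assms unfolding own_partial_sums_def Let_def by (auto simp del: upt_Suc)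
  then show ?thesis
    using v by (auto simp: set_partial_sums_Suc)
qed

text \<open>One tree level costs r + 2 rounds: waiting at most r + 1 rounds for the next
  round that handles a given digit, plus one round of transit.\<close>

definition up_deadline :: "nat \<Rightarrow> nat" where
  "up_deadline v = r + 1 + (r + 2) * (floor_log n - floor_log v)"

lemma up_deadline_child:
  assumes "v \<in> {1..n}" "c = 2 * v \<or> c = 2 * v + 1" "c \<le> n"
  shows "up_deadline v = up_deadline c + (r + 2)"
proof -
  have "floor_log c = Suc (floor_log v)"
    using assms(1,2) by (simp add: floor_log_child)
  moreover have "floor_log c \<le> floor_log n"
    using assms(3) by (rule floor_log_le_iff)
  ultimately have "floor_log n - floor_log v = Suc (floor_log n - floor_log c)"
    by simp
  then show ?thesis
    unfolding up_deadline_def by simp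
qed

lemma partial_sum_known:
  "v \<in> {1..n} \<Longrightarrow> up_deadline v \<le> t \<Longrightarrow> j < Suc r \<Longrightarrow>
    \<exists>x. (v, j, x) \<in> set (partial_sums (state t v))"
proof (induction "n - v" arbitrary: v t rule: less_induct)
  case less
  note v = less.prems(1)
  define t0 where "t0 = up_deadline v - 1"
  have ready: "child_ready (state t0 v) c j" if c: "c = 2 * v \<or> c = 2 * v + 1" for c
  proof (cases "c \<le> n")
    case False
    then show ?thesis using v unfolding child_ready_def by simp
  next
    case True
    have cn: "c \<in> {1..n}" "n - c < n - v"
      using True c v by auto
    note deadline = up_deadline_child[OF v c True]
    obtain t' where t': "up_deadline c \<le> t'" "t' < up_deadline c + Suc r" "t' mod Suc r = j"
      using exists_mod_in_window[OF less.prems(3)] by blast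
    obtain x where "(c, t' mod Suc r, x) \<in> set (partial_sums (state t' c))"
      using less.hyps[OF cn(2) cn(1) t'(1)] less.prems(3) t'(3) by blast
    then obtain y where "(c, j, y) \<in> set (partial_sums (state (Suc t') v))"
      using partial_sum_sent_up[OF v c True] t'(3) by blast
    moreover have "Suc t' \<le> t0"
      unfolding t0_def deadline using t'(2) by simp
    ultimately show ?thesis
      using partial_sums_mono[OF v] v unfolding child_ready_def by auto
  qed
  have "r \<le> t0"
    unfolding t0_def up_deadline_def by simp
  then obtain x where "(v, j, x) \<in> set (partial_sums (state (Suc t0) v))"
    using own_partial_sum_added[OF v _ less.prems(3) ready ready] by blast
  moreover have "Suc t0 \<le> t"
    using less.prems(2) unfolding t0_def up_deadline_def by simp
  ultimately show ?case
    using partial_sums_mono[OF v] by blast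
qed

lemma total_sent_down:
  assumes v: "v \<in> {1..n}" "2 \<le> v" and x: "knows_total (state t (v div 2)) (t mod Suc r) x"
  shows "\<exists>y. (t mod Suc r, y) \<in> set (total_digits (state (Suc t) v))"
proof -
  let ?p = "v div 2" and ?j = "t mod Suc r"
  let ?m = "total_digit (state t ?p) ?j"
  have pn: "?p \<in> {1..n}" and not_parent: "v \<noteq> ?p div 2"
    using v by auto
  have "knows_total (state t ?p) ?j ?m"
    unfolding total_digit_def using x by (rule someI)
  then have "?m = digit_sum 1 ?j"
    using knows_total_correct[OF stored_values_always_correct pn] by blast
  then have "?m < n\<^sup>2"
    using three_le_n heap_digit_sum_less[of n] by simp
  moreover have "payload r (state t ?p) v = ?m"
    using pn not_parent by (simp add: payload_def)
  ultimately have "sends_to r (state t ?p) v"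
    using pn not_parent three_le_n x unfolding sends_to_def Let_def by auto
  then have "(v, ?m) \<in> set (global_msgs r (state t ?p))"
    using pn \<open>payload r (state t ?p) v = ?m\<close> by (auto simp: global_msgs_mem)
  then have "(?p, ?m) \<in> global_inbox t v"
    using pn unfolding global_inbox_def by blast
  then have "(?j, SOME m. (?p, m) \<in> global_inbox t v)
      \<in> set (received_totals r (state t v) (global_inbox t v))"
    using v unfolding received_totals_def by auto
  then show ?thesis
    using v by (auto simp: set_total_digits_Suc)
qed

lemma total_known:
  "v \<in> {1..n} \<Longrightarrow> up_deadline 1 + (r + 2) * floor_log v \<le> t \<Longrightarrow> j < Suc r \<Longrightarrow>
    \<exists>x. knows_total (state t v) j x"
proof (induction v arbitrary: t rule: less_induct)
  case (less v)
  note v = less.prems(1)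
  show ?case
  proof (cases "v = 1")
    case True
    then show ?thesis
      using partial_sum_known[of 1 t j] less.prems by (simp add: knows_total_def)
  next
    case False
    then have v2: "2 \<le> v" and pn: "v div 2 \<in> {1..n}" "v div 2 < v"
      using v by auto
    obtain t' where t': "up_deadline 1 + (r + 2) * floor_log (v div 2) \<le> t'"
      "t' < up_deadline 1 + (r + 2) * floor_log (v div 2) + Suc r" "t' mod Suc r = j"
      using exists_mod_in_window[OF less.prems(3)] by blast
    obtain x where "knows_total (state t' (v div 2)) (t' mod Suc r) x"
      using less.IH[OF pn(2,1) t'(1)] less.prems(3) t'(3) by blast
    then obtain y where "(j, y) \<in> set (total_digits (state (Suc t') v))"
      using total_sent_down[OF v v2] t'(3) by blast
    moreover have "Suc t' \<le> t"
      using t'(2) less.prems(2) floor_log_rec[OF v2] by (simp del: floor_log_half)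
    ultimately show ?thesis
      using total_digits_mono[OF v] False v unfolding knows_total_def by auto
  qed
qed

lemma cc_output_if_totals_known:
  assumes v: "v \<in> {1..n}" and known: "\<forall>j<Suc r. \<exists>x. knows_total (state t v) j x"
  shows "cc_output r (state t v) = num_r_cycles n E r"
proof -
  have "total_digit (state t v) j = digit_sum 1 j" if "j < Suc r" for j
    using known that knows_total_correct[OF stored_values_always_correct v] unfolding total_digit_def
    by (meson someI)
  then have "cc_output r (state t v) = (\<Sum>j<Suc r. n ^ j * digit_sum 1 j)"
    unfolding cc_output_def using known v three_le_n by simp
  also have "\<dots> = (\<Sum>u\<in>{1..n}. card (r_cycles_with_min n E r u))"
  proof (rule sum_heap_digit_sum_root)
    have "n ^ r < n ^ Suc r"
      using three_le_n by simp
    then show "\<forall>u\<in>{1..n}. card (r_cycles_with_min n E r u) < n ^ Suc r"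
      using card_r_cycles_with_min_le le_less_trans by blast
  qed
  also have "\<dots> = num_r_cycles n E r"
    unfolding num_r_cycles_def by (rule card_r_cycles_eq_sum_with_min[symmetric])
  finally show ?thesis .
qed

lemma cc_output_cases:
  "v \<in> {1..n} \<Longrightarrow> cc_output r (state t v) = 0 \<or> cc_output r (state t v) = num_r_cycles n E r"
  using cc_output_if_totals_known unfolding cc_output_def by auto

lemma cc_output_correct:
  assumes "v \<in> {1..n}" "up_deadline 1 + (r + 2) * floor_log n \<le> t"
  shows "cc_output r (state t v) = num_r_cycles n E r"
proof -
  have "floor_log v \<le> floor_log n"
    using assms(1) by (simp add: floor_log_le_iff)
  then have "up_deadline 1 + (r + 2) * floor_log v \<le> t"
    using assms(2) mult_le_mono2[of "floor_log v" "floor_log n" "r + 2"] by linarith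
  then show ?thesis
    using total_known[OF assms(1)] cc_output_if_totals_known[OF assms(1)] by blast
qed

end

section \<open>Bandwidth and round complexity\<close>

lemma cap_8_bounds:
  assumes "3 \<le> n"
  shows "3 \<le> cap 8 n \<and> n\<^sup>2 \<le> 2 ^ cap 8 n"
proof -
  have log_ge_1: "1 \<le> log 2 (real n)"
    using assms by simp
  have cap: "8 * log 2 (real n) \<le> real (cap 8 n)"
    unfolding cap_def by linarith
  have "log 2 (real (n\<^sup>2)) = 2 * log 2 (real n)"
    using assms by (simp add: log_nat_power)
  also have "\<dots> \<le> real (cap 8 n)"
    using cap log_ge_1 by linarith
  finally have "real (n\<^sup>2) \<le> 2 powr real (cap 8 n)"
    using assms by (simp add: log_le_iff del: of_nat_power)
  then have "real (n\<^sup>2) \<le> real (2 ^ cap 8 n)"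
    by (simp add: powr_realpow)
  then have "n\<^sup>2 \<le> 2 ^ cap 8 n"
    by (simp only: of_nat_le_iff)
  moreover have "3 \<le> cap 8 n"
    using cap log_ge_1 by linarith
  ultimately show ?thesis by simp
qed

lemma schedule_le_time_bound:
  fixes r n :: nat
  assumes r: "3 \<le> r" and n: "3 \<le> n"
  shows "real (r + 1 + 2 * (r + 2) * floor_log n) \<le> real (r - 1) * 8 * log 2 (real n)"
proof -
  define L where "L = log 2 (real n)"
  have L: "1 \<le> L"
    unfolding L_def using n by simp
  have "2 ^ floor_log n \<le> n"
    using n by (simp add: floor_log_exp2_le)
  then have D: "real (floor_log n) \<le> L"
    unfolding L_def using le_log2_of_power by blast
  have "real (r + 1 + 2 * (r + 2) * floor_log n) = real (r + 1) + 2 * real (r + 2) * real (floor_log n)"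
    by (simp add: algebra_simps)
  also have "\<dots> \<le> real (r + 1) * L + 2 * real (r + 2) * L"
    using L D by (intro add_mono mult_left_mono) auto
  also have "\<dots> = (3 * real r + 5) * L"
    by (simp add: algebra_simps)
  also have "\<dots> \<le> (8 * real r - 8) * L"
    using r L by (intro mult_right_mono) auto
  also have "\<dots> = real (r - 1) * 8 * L"
    using r by (simp add: of_nat_diff algebra_simps)
  finally show ?thesis
    unfolding L_def .
qed

lemma cycle_count_alg_bandwidth:
  assumes "simple_graph n E" "hyb_exec (cycle_count_alg r) n E (cap 8 n) s" "v \<in> {1..n}"
  shows "respects_global_bw (cap 8 n) (h_gmsg (cycle_count_alg r) (s t v))"
proof -
  interpret cc_run r n E "cap 8 n" s
    using assms(1,2) by unfold_locales
  show ?thesis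
    using global_msgs_respect_bw[OF assms(3)] cap_8_bounds
    by (simp add: cycle_count_alg_simps state_def)
qed

lemma cycle_count_alg_correct:
  assumes "simple_graph n E" "hyb_exec (cycle_count_alg r) n E (cap 8 n) s" "v \<in> {1..n}"
    and time: "real (r - 1) * 8 * log 2 (real n) \<le> real t"
  shows "h_out (cycle_count_alg r) (s t v) = num_r_cycles n E r"
proof -
  interpret cc_run r n E "cap 8 n" s
    using assms(1,2) by unfold_locales
  have out: "h_out (cycle_count_alg r) (s t v) = cc_output r (state t v)"
    by (simp add: cycle_count_alg_simps state_def)
  consider (few_nodes) "n < 3" | (short) "3 \<le> n" "r < 3" | (main) "3 \<le> n" "3 \<le> r"
    by linarith
  then show ?thesis
  proof cases
    case few_nodes
    then have "r_cycles n E r = {}"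
      by (intro r_cycles_empty) linarith
    then have "num_r_cycles n E r = 0"
      by (simp add: num_r_cycles_def)
    moreover have "cc_output r (state t v) = 0"
      using few_nodes assms(3) by (simp add: cc_output_def)
    ultimately show ?thesis
      using out by simp
  next
    case short
    interpret cc_lossless_run r n E "cap 8 n" s
      using short cap_8_bounds by unfold_locales auto
    have "num_r_cycles n E r = 0"
      using short by (simp add: num_r_cycles_def r_cycles_empty)
    then show ?thesis
      using out cc_output_cases[OF assms(3), of t] by auto
  next
    case main
    interpret cc_lossless_run r n E "cap 8 n" s
      using main cap_8_bounds by unfold_locales auto
    have "real (up_deadline 1 + (r + 2) * floor_log n) \<le> real t"
      using schedule_le_time_bound[OF main(2,1)] time unfolding up_deadline_def by simp
    then have "up_deadline 1 + (r + 2) * floor_log n \<le> t"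
      by (simp only: of_nat_le_iff)
    then show ?thesis
      using out cc_output_correct[OF assms(3)] by simp
  qed
qed

theorem proposition36:
  shows "\<exists>c::real. c > 0 \<and> (\<forall>r::nat. \<exists>A::hyb_alg. \<forall>n::nat. \<forall>E.
     1 \<le> n \<longrightarrow> simple_graph n E \<longrightarrow>
     (\<forall>s. hyb_exec A n E (cap c n) s \<longrightarrow>
        (\<forall>t. \<forall>v\<in>{1..n}. respects_global_bw (cap c n) (h_gmsg A (s t v))) \<and>
        (\<forall>t. real t \<ge> real (r - 1) * c * log 2 (real n) \<longrightarrow>
             (\<forall>v\<in>{1..n}. h_out A (s t v) = num_r_cycles n E r))))"
proof (intro exI[of _ 8] conjI allI)
  fix r
  show "\<exists>A::hyb_alg. \<forall>n E. 1 \<le> n \<longrightarrow> simple_graph n E \<longrightarrow>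
     (\<forall>s. hyb_exec A n E (cap 8 n) s \<longrightarrow>
        (\<forall>t. \<forall>v\<in>{1..n}. respects_global_bw (cap 8 n) (h_gmsg A (s t v))) \<and>
        (\<forall>t. real t \<ge> real (r - 1) * 8 * log 2 (real n) \<longrightarrow>
             (\<forall>v\<in>{1..n}. h_out A (s t v) = num_r_cycles n E r)))"
    using cycle_count_alg_bandwidth cycle_count_alg_correct
    by (intro exI[of _ "cycle_count_alg r"]) blast
qed simp

end
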